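(* Let $k>2$, $n\ge1$, and let $\sigma:Z_k\to Z_k$ be a map. Define $\psi_\sigma:P_k^n\to P_k^n$ by $\psi_\sigma(f)(\bar a)=\sigma(f(\bar a))$ for all $\bar a\in Z_k^n$. Then $f\simeq_{cmr}\psi_\sigma(f)$ for all $f\in P_k^n$ if and only if $\sigma$ is a permutation of $Z_k$.
   Context: $Z_k=\{0,\dots,k-1\}$; $P_k^n$ is the set of all maps $Z_k^n\to Z_k$ in variables $x_1,\dots,x_n$. $x_i$ is essential in $f$ if changing only the $i$-th argument can change the value of $f$; $Ess(f)$, $ess(f)=|Ess(f)|$. For distinct essential $x_i,x_j$, $f_{i\leftarrow j}(a_1,\dots,a_n)=f(a_1,\dots,a_{i-1},a_j,a_{i+1},\dots,a_n)$. The relation $f\simeq_{cmr}g$ is defined recursively: if $ess(f)\le1$ it means $ess(f)=ess(g)$; if $ess(f)\ge2$ it means $ess(f)=ess(g)$ and there is a permutation $\sigma'$ of $\{1,\dots,n\}$ with $f_{i\leftarrow j}\simeq_{cmr} g_{\sigma'(i)\leftarrow\sigma'(j)}$ for all $j<i$ with $x_i,x_j\in Ess(f)$. *)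

theory Defs
  imports Main
begin

(* Tuples of Z_k^n are lists of length n with entries < k; variable x_(i+1) is list index i. *)
definition tuples :: "nat \<Rightarrow> nat \<Rightarrow> nat list set" where
  "tuples k n = {a. length a = n \<and> (\<forall>x\<in>set a. x < k)}"

(* P_k^n: maps Z_k^n -> Z_k (only values on tuples k n matter) *)
definition Pkn :: "nat \<Rightarrow> nat \<Rightarrow> (nat list \<Rightarrow> nat) set" where
  "Pkn k n = {f. \<forall>a\<in>tuples k n. f a < k}"

definition essential :: "nat \<Rightarrow> nat \<Rightarrow> (nat list \<Rightarrow> nat) \<Rightarrow> nat \<Rightarrow> bool" where
  "essential k n f i \<longleftrightarrow> i < n \<and>
     (\<exists>a\<in>tuples k n. \<exists>c<k. f a \<noteq> f (a[i := c]))"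

definition Ess :: "nat \<Rightarrow> nat \<Rightarrow> (nat list \<Rightarrow> nat) \<Rightarrow> nat set" where
  "Ess k n f = {i. essential k n f i}"

definition ess :: "nat \<Rightarrow> nat \<Rightarrow> (nat list \<Rightarrow> nat) \<Rightarrow> nat" where
  "ess k n f = card (Ess k n f)"

definition ident :: "(nat list \<Rightarrow> nat) \<Rightarrow> nat \<Rightarrow> nat \<Rightarrow> nat list \<Rightarrow> nat" where
  "ident f i j = (\<lambda>a. f (a[i := a ! j]))"

(* The recursive relation, with a fuel parameter; since ess(f_{i<-j}) < ess f,
   fuel ess f is always sufficient, see cmr below. *)
fun cmr_fuel :: "nat \<Rightarrow> nat \<Rightarrow> nat \<Rightarrow> (nat list \<Rightarrow> nat) \<Rightarrow> (nat list \<Rightarrow> nat) \<Rightarrow> bool" where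
  "cmr_fuel k n 0 f g = (ess k n f = ess k n g)"
| "cmr_fuel k n (Suc m) f g =
     (if ess k n f \<le> 1 then ess k n f = ess k n g
      else ess k n f = ess k n g \<and>
        (\<exists>\<sigma>'. bij_betw \<sigma>' {..<n} {..<n} \<and>
           (\<forall>i\<in>Ess k n f. \<forall>j\<in>Ess k n f. j < i \<longrightarrow>
              cmr_fuel k n m (ident f i j) (ident g (\<sigma>' i) (\<sigma>' j)))))"

definition cmr :: "nat \<Rightarrow> nat \<Rightarrow> (nat list \<Rightarrow> nat) \<Rightarrow> (nat list \<Rightarrow> nat) \<Rightarrow> bool" where
  "cmr k n f g = cmr_fuel k n (ess k n f) f g"

definition psi :: "(nat \<Rightarrow> nat) \<Rightarrow> (nat list \<Rightarrow> nat) \<Rightarrow> (nat list \<Rightarrow> nat)" where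
  "psi \<sigma> f = (\<lambda>a. \<sigma> (f a))"

end

theory Submission
  imports Defs
begin

(* An injective sigma only relabels values, so psi_sigma commutes with identifying variables and
   preserves essential variables; hence the identity permutation witnesses f ~cmr psi_sigma f at
   every level of the recursion. If sigma x = sigma y with x ~= y, the function taking the value x
   or y according to whether its first argument is x has an essential variable, while its image
   under psi_sigma is constant. *)

lemma tuples_update: "a \<in> tuples k n \<Longrightarrow> c < k \<Longrightarrow> a[i := c] \<in> tuples k n"
  unfolding tuples_def using set_update_subset_insert by fastforce

lemma ident_in_Pkn:
  assumes "f \<in> Pkn k n" and "j < n"
  shows "ident f i j \<in> Pkn k n"
proof -
  have "a[i := a ! j] \<in> tuples k n" if "a \<in> tuples k n" for a
    using that assms(2) by (intro tuples_update) (auto simp: tuples_def)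
  with assms(1) show ?thesis
    unfolding Pkn_def ident_def by auto
qed

lemma ident_psi: "ident (psi \<sigma> f) i j = psi \<sigma> (ident f i j)"
  by (simp add: ident_def psi_def)

lemma Ess_psi_inj:
  assumes "inj_on \<sigma> {..<k}" and "f \<in> Pkn k n"
  shows "Ess k n (psi \<sigma> f) = Ess k n f"
proof -
  have "\<sigma> (f a) \<noteq> \<sigma> (f (a[i := c])) \<longleftrightarrow> f a \<noteq> f (a[i := c])"
    if "a \<in> tuples k n" "c < k" for a c i
  proof -
    have "f a < k" "f (a[i := c]) < k"
      using assms(2) that tuples_update[OF that] unfolding Pkn_def by auto
    with assms(1) show ?thesis
      unfolding inj_on_def by auto
  qed
  then show ?thesis
    unfolding Ess_def essential_def psi_def by (auto; blast)
qed

lemma Ess_const: "Ess k n (\<lambda>_. c) = {}"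
  by (simp add: Ess_def essential_def)

lemma Ess_subset: "Ess k n f \<subseteq> {..<n}"
  by (auto simp: Ess_def essential_def)

lemma ess_pos_iff: "0 < ess k n f \<longleftrightarrow> Ess k n f \<noteq> {}"
  using finite_subset[OF Ess_subset] by (simp add: ess_def card_gt_0_iff)

lemma cmr_fuel_imp_ess_eq: "cmr_fuel k n m f g \<Longrightarrow> ess k n f = ess k n g"
  by (cases m) (auto split: if_splits)

lemma cmr_imp_ess_eq: "cmr k n f g \<Longrightarrow> ess k n f = ess k n g"
  unfolding cmr_def by (rule cmr_fuel_imp_ess_eq)

lemma cmr_fuel_psi_inj:
  assumes "inj_on \<sigma> {..<k}" and "f \<in> Pkn k n"
  shows "cmr_fuel k n m f (psi \<sigma> f)"
  using assms(2)
proof (induction m arbitrary: f)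
  case 0
  then show ?case
    using Ess_psi_inj[OF assms(1)] by (simp add: ess_def)
next
  case (Suc m)
  have ess_eq: "ess k n f = ess k n (psi \<sigma> f)"
    using Ess_psi_inj[OF assms(1) Suc.prems] by (simp add: ess_def)
  have "cmr_fuel k n m (ident f i j) (ident (psi \<sigma> f) (id i) (id j))"
    if "j \<in> Ess k n f" for i j
  proof -
    from that have "j < n" by (simp add: Ess_def essential_def)
    with Suc.prems have "ident f i j \<in> Pkn k n" by (rule ident_in_Pkn)
    then show ?thesis
      using Suc.IH by (simp add: ident_psi)
  qed
  moreover have "bij_betw id {..<n} {..<n}" by simp
  ultimately show ?case
    using ess_eq by auto
qed

lemma cmr_psi_inj: "inj_on \<sigma> {..<k} \<Longrightarrow> f \<in> Pkn k n \<Longrightarrow> cmr k n f (psi \<sigma> f)"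
  unfolding cmr_def by (rule cmr_fuel_psi_inj)

lemma not_cmr_psi_non_inj:
  assumes "n \<ge> 1" and "x < k" "y < k" "x \<noteq> y" "\<sigma> x = \<sigma> y"
  obtains f where "f \<in> Pkn k n" and "\<not> cmr k n f (psi \<sigma> f)"
proof
  define f where "f = (\<lambda>a::nat list. if a ! 0 = x then x else y)"
  show "f \<in> Pkn k n"
    using assms by (simp add: Pkn_def f_def)
  have "replicate n x \<in> tuples k n"
    using assms by (simp add: tuples_def)
  moreover have "f (replicate n x) \<noteq> f ((replicate n x)[0 := y])"
    using assms by (simp add: f_def)
  ultimately have "0 \<in> Ess k n f"
    using assms unfolding Ess_def essential_def by auto
  moreover have "psi \<sigma> f = (\<lambda>_. \<sigma> x)"
    using assms by (auto simp: psi_def f_def)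
  ultimately have "ess k n f \<noteq> ess k n (psi \<sigma> f)"
    using ess_pos_iff Ess_const by (metis empty_iff less_irrefl)
  then show "\<not> cmr k n f (psi \<sigma> f)"
    using cmr_imp_ess_eq by blast
qed

theorem theorem17:
  fixes k n :: nat and \<sigma> :: "nat \<Rightarrow> nat"
  assumes "k > 2" and "n \<ge> 1"
    and "\<forall>x<k. \<sigma> x < k"
  shows "(\<forall>f\<in>Pkn k n. cmr k n f (psi \<sigma> f)) \<longleftrightarrow> bij_betw \<sigma> {..<k} {..<k}"
proof
  assume cmr_all: "\<forall>f\<in>Pkn k n. cmr k n f (psi \<sigma> f)"
  have "inj_on \<sigma> {..<k}"
  proof (rule inj_onI, rule ccontr)
    fix x y assume "x \<in> {..<k}" "y \<in> {..<k}" "\<sigma> x = \<sigma> y" "x \<noteq> y"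
    then obtain f where "f \<in> Pkn k n" "\<not> cmr k n f (psi \<sigma> f)"
      using not_cmr_psi_non_inj[OF assms(2), of x k y \<sigma>] by auto
    with cmr_all show False by blast
  qed
  moreover have "\<sigma> ` {..<k} = {..<k}"
    using assms(3) \<open>inj_on \<sigma> {..<k}\<close> by (intro endo_inj_surj) auto
  ultimately show "bij_betw \<sigma> {..<k} {..<k}"
    by (simp add: bij_betw_def)
next
  assume "bij_betw \<sigma> {..<k} {..<k}"
  then show "\<forall>f\<in>Pkn k n. cmr k n f (psi \<sigma> f)"
    using cmr_psi_inj bij_betw_imp_inj_on by blast
qed

end
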